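(* Let $X$ be a compact subset of $\mathbb{R}^n_\infty$. Then for every $X$-surrounding point $p$, the function $d_\infty^X(p,\cdot)=d_\infty(p,\cdot)|_X$ is minimal, i.e. $\iota_X(\mathcal{F}(X))\subseteq\mathbf{E}(X)$, where $\iota_X(z)=d_\infty^X(z,\cdot)$. In addition, the map $\iota_X:\mathcal{F}(X)\to\mathbf{E}(X)$ preserves distances; thus $\mathcal{F}(X)$ isometrically embeds into $\mathbf{E}(X)$.
   Context: $\mathbb{R}^n_\infty$ is $\mathbb{R}^n$ with the $\ell^\infty$-metric $d_\infty$. For $1\le i\le n$, $\Lambda_i=\{x:x_i=\|x\|_\infty\}$ and $p+\xi\Lambda_i=\{p+\xi z:z\in\Lambda_i\}$ for $\xi\in\{\pm1\}$. A point $p$ is $X$-surrounding if $(p+\xi\Lambda_i)\cap X\ne\emptyset$ for all $i$ and $\xi$; $\mathcal{F}(X)$ is the set of such points with metric $d_\infty$. $\Delta(X)=\{f:X\to\mathbb{R}\text{ bounded}:f(x)+f(x')\ge d_\infty(x,x')\}$, a function in $\Delta(X)$ is minimal if no other element of $\Delta(X)$ lies pointwise below it, and the tight span $\mathbf{E}(X)$ is the set of minimal elements with the sup-norm metric. *)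

theory Defs
  imports "HOL-Analysis.Analysis"
begin

definition linf_norm :: "real ^ 'n \<Rightarrow> real" where
  "linf_norm x = Max (range (\<lambda>i. \<bar>x $ i\<bar>))"

definition dinf :: "real ^ 'n \<Rightarrow> real ^ 'n \<Rightarrow> real" where
  "dinf x y = linf_norm (x - y)"

definition Lambda_cone :: "'n \<Rightarrow> (real ^ 'n) set" where
  "Lambda_cone i = {x. x $ i = linf_norm x}"

definition shifted_cone :: "real ^ 'n \<Rightarrow> real \<Rightarrow> 'n \<Rightarrow> (real ^ 'n) set" where
  "shifted_cone p \<xi> i = {p + \<xi> *\<^sub>R z | z. z \<in> Lambda_cone i}"

definition surrounding :: "(real ^ 'n) set \<Rightarrow> real ^ 'n \<Rightarrow> bool" where
  "surrounding X p \<longleftrightarrow> (\<forall>i. \<forall>\<xi>\<in>{1, -1}. shifted_cone p \<xi> i \<inter> X \<noteq> {})"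

definition F_set :: "(real ^ 'n) set \<Rightarrow> (real ^ 'n) set" where
  "F_set X = {p. surrounding X p}"

text \<open>Delta(X): bounded functions on X (values outside X are irrelevant).\<close>
definition Delta :: "(real ^ 'n) set \<Rightarrow> (real ^ 'n \<Rightarrow> real) set" where
  "Delta X = {f. (\<exists>B. \<forall>x\<in>X. \<bar>f x\<bar> \<le> B) \<and>
                 (\<forall>x\<in>X. \<forall>x'\<in>X. f x + f x' \<ge> dinf x x')}"

definition minimal_in_Delta :: "(real ^ 'n) set \<Rightarrow> (real ^ 'n \<Rightarrow> real) \<Rightarrow> bool" where
  "minimal_in_Delta X f \<longleftrightarrow> f \<in> Delta X \<and>
     (\<forall>g\<in>Delta X. (\<forall>x\<in>X. g x \<le> f x) \<longrightarrow> (\<forall>x\<in>X. g x = f x))"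

definition tight_span :: "(real ^ 'n) set \<Rightarrow> (real ^ 'n \<Rightarrow> real) set" where
  "tight_span X = {f. minimal_in_Delta X f}"

definition sup_dist :: "(real ^ 'n) set \<Rightarrow> (real ^ 'n \<Rightarrow> real) \<Rightarrow> (real ^ 'n \<Rightarrow> real) \<Rightarrow> real" where
  "sup_dist X f g = (SUP x\<in>X. \<bar>f x - g x\<bar>)"

definition iota :: "(real ^ 'n) set \<Rightarrow> real ^ 'n \<Rightarrow> (real ^ 'n \<Rightarrow> real)" where
  "iota X z = (\<lambda>x. if x \<in> X then dinf z x else 0)"

end

theory Submission
  imports Defs
begin

text \<open>If \<open>p\<close> is \<open>X\<close>-surrounding, then every \<open>x\<close> can be joined through \<open>p\<close> to some \<open>y \<in> X\<close>
  by a geodesic, i.e. \<open>d(x,y) = d(x,p) + d(p,y)\<close>: take \<open>y\<close> in the cone at \<open>p\<close> along a coordinate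
  realising \<open>d(x,p)\<close>, opening away from \<open>x\<close>. Minimality of \<open>d(p,\<cdot>)\<close> follows, since any
  \<open>g \<in> \<Delta>(X)\<close> below it satisfies \<open>g x \<ge> d(x,y) - g y \<ge> d(x,y) - d(p,y) = d(x,p)\<close>; and for \<open>x = q\<close>
  the same \<open>y\<close> realises \<open>|d(p,y) - d(q,y)| = d(p,q)\<close>, the upper bound being the triangle
  inequality.\<close>

lemma component_abs_le_linf_norm: "\<bar>x $ i\<bar> \<le> linf_norm x"
  unfolding linf_norm_def by (rule Max_ge) auto

lemma linf_norm_attained: "\<exists>i. linf_norm x = \<bar>x $ i\<bar>"
proof -
  have "linf_norm x \<in> range (\<lambda>i. \<bar>x $ i\<bar>)"
    unfolding linf_norm_def by (rule Max_in) auto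
  then show ?thesis by auto
qed

lemma linf_norm_le: "(\<And>i. \<bar>x $ i\<bar> \<le> c) \<Longrightarrow> linf_norm x \<le> c"
  using linf_norm_attained by metis

lemma linf_norm_le_norm: "linf_norm x \<le> norm x"
  by (rule linf_norm_le) (rule component_le_norm_cart)

lemma linf_norm_minus: "linf_norm (- x) = linf_norm x"
  unfolding linf_norm_def by simp

lemma linf_norm_triangle: "linf_norm (x + y) \<le> linf_norm x + linf_norm y"
proof (rule linf_norm_le)
  fix i
  have "\<bar>(x + y) $ i\<bar> \<le> \<bar>x $ i\<bar> + \<bar>y $ i\<bar>" by simp
  also have "\<dots> \<le> linf_norm x + linf_norm y"
    using component_abs_le_linf_norm add_mono by blast
  finally show "\<bar>(x + y) $ i\<bar> \<le> linf_norm x + linf_norm y" .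
qed

lemma dinf_commute: "dinf x y = dinf y x"
  unfolding dinf_def by (metis linf_norm_minus minus_diff_eq)

lemma dinf_triangle: "dinf x z \<le> dinf x y + dinf y z"
  unfolding dinf_def using linf_norm_triangle[of "x - y" "y - z"] by simp

lemma component_dist_le_dinf: "\<bar>x $ i - y $ i\<bar> \<le> dinf x y"
  unfolding dinf_def using component_abs_le_linf_norm[of "x - y" i] by simp

lemma dinf_nonneg: "0 \<le> dinf x y"
  by (meson abs_ge_zero component_dist_le_dinf order_trans)

lemma dinf_attained: "\<exists>i. dinf x y = \<bar>x $ i - y $ i\<bar>"
  unfolding dinf_def using linf_norm_attained[of "x - y"] by simp

lemma dinf_le_norm_add: "dinf x y \<le> norm x + norm y"
  unfolding dinf_def using linf_norm_le_norm[of "x - y"] norm_triangle_ineq4[of x y] by linarith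

lemma dinf_shifted_cone_ge:
  assumes "y \<in> shifted_cone p \<xi> i" "\<xi> \<in> {1, -1}" "\<xi> * (p $ i - x $ i) \<ge> 0"
  shows "\<bar>p $ i - x $ i\<bar> + dinf p y \<le> dinf x y"
proof -
  obtain z where y: "y = p + \<xi> *\<^sub>R z" and z: "z $ i = linf_norm z"
    using assms(1) unfolding shifted_cone_def Lambda_cone_def by auto
  have "z $ i \<ge> 0"
    using z component_abs_le_linf_norm[of z i] by linarith
  then have "\<bar>x $ i - y $ i\<bar> = \<bar>p $ i - x $ i\<bar> + z $ i"
    using assms(2,3) unfolding y by auto
  moreover have "dinf p y = z $ i"
    using assms(2) unfolding dinf_def y z by (auto simp: linf_norm_minus)
  ultimately show ?thesis
    using component_dist_le_dinf[of x i y] by simp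
qed

lemma surrounding_geodesic:
  assumes "surrounding X p"
  obtains y where "y \<in> X" "dinf x y = dinf x p + dinf p y"
proof -
  obtain i where i: "dinf p x = \<bar>p $ i - x $ i\<bar>"
    using dinf_attained by blast
  define \<xi> :: real where "\<xi> = (if p $ i - x $ i \<ge> 0 then 1 else -1)"
  have \<xi>: "\<xi> \<in> {1, -1}" "\<xi> * (p $ i - x $ i) \<ge> 0"
    unfolding \<xi>_def by auto
  obtain y where y: "y \<in> X" "y \<in> shifted_cone p \<xi> i"
    using assms \<xi>(1) unfolding surrounding_def by blast
  have "dinf x p + dinf p y \<le> dinf x y"
    using dinf_shifted_cone_ge[OF y(2) \<xi>] i dinf_commute[of x p] by simp
  then have "dinf x y = dinf x p + dinf p y"
    using dinf_triangle[of x y p] by linarith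
  with y(1) show thesis by (rule that)
qed

lemma iota_in_Delta:
  assumes "bounded X"
  shows "iota X p \<in> Delta X"
proof -
  obtain M where M: "\<And>x. x \<in> X \<Longrightarrow> norm x \<le> M"
    using assms unfolding bounded_iff by blast
  have "\<bar>iota X p x\<bar> \<le> norm p + M" if "x \<in> X" for x
    using that M[OF that] dinf_le_norm_add[of p x] dinf_nonneg[of p x]
    unfolding iota_def by simp
  moreover have "dinf x x' \<le> iota X p x + iota X p x'" if "x \<in> X" "x' \<in> X" for x x'
    using that dinf_triangle[of x x' p] dinf_commute[of x p] unfolding iota_def by simp
  ultimately show ?thesis
    unfolding Delta_def by blast
qed

lemma iota_minimal_in_Delta:
  assumes "bounded X" "surrounding X p"
  shows "minimal_in_Delta X (iota X p)"
  unfolding minimal_in_Delta_def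
proof (intro conjI ballI impI iota_in_Delta[OF assms(1)])
  fix g x
  assume g: "g \<in> Delta X" and below: "\<forall>x\<in>X. g x \<le> iota X p x" and x: "x \<in> X"
  obtain y where y: "y \<in> X" "dinf x y = dinf x p + dinf p y"
    using surrounding_geodesic[OF assms(2)] by blast
  have "dinf x y \<le> g x + g y"
    using g x y(1) unfolding Delta_def by blast
  moreover have "g y \<le> dinf p y"
    using below y(1) unfolding iota_def by auto
  ultimately have "iota X p x \<le> g x"
    using x y(2) dinf_commute[of x p] unfolding iota_def by simp
  then show "g x = iota X p x"
    using below x by force
qed

lemma sup_dist_iota:
  assumes "surrounding X p"
  shows "sup_dist X (iota X p) (iota X q) = dinf p q"
  unfolding sup_dist_def
proof (rule cSup_eq_maximum)
  obtain y where y: "y \<in> X" "dinf q y = dinf q p + dinf p y"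
    using surrounding_geodesic[OF assms] by blast
  then have "dinf p q = \<bar>iota X p y - iota X q y\<bar>"
    using dinf_commute[of p q] dinf_nonneg[of q p] unfolding iota_def by simp
  with y(1) show "dinf p q \<in> (\<lambda>x. \<bar>iota X p x - iota X q x\<bar>) ` X"
    by blast
next
  fix r
  assume "r \<in> (\<lambda>x. \<bar>iota X p x - iota X q x\<bar>) ` X"
  then obtain x where "x \<in> X" "r = \<bar>dinf p x - dinf q x\<bar>"
    unfolding iota_def by auto
  then show "r \<le> dinf p q"
    using dinf_triangle[of p x q] dinf_triangle[of q x p] dinf_commute[of p q] by auto
qed

theorem proposition5p4:
  fixes X :: "(real ^ 'n) set"
  assumes "compact X"
  shows "iota X ` F_set X \<subseteq> tight_span X \<and>
         (\<forall>p\<in>F_set X. \<forall>q\<in>F_set X. sup_dist X (iota X p) (iota X q) = dinf p q)"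
  using iota_minimal_in_Delta[OF compact_imp_bounded[OF assms]] sup_dist_iota
  unfolding F_set_def tight_span_def by blast

end
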